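(* Let $T$ be a finite tree rooted at a vertex $v$ and let $M_0$ be a dominating set of $T$ such that (a) no parent of a supported vertex of $M_0$ lies in $M_0$, and (b) no supported vertex of $M_0$ is a descendant of another supported vertex of $M_0$. Then Algorithm 1 (described below), applied to $T$ rooted at $v$ and $M_0$, terminates and outputs a minimal dominating set $M_i$ with $|M_i|\ge |M_0|$ (for any choices made during the algorithm). Algorithm 1: set $i=0$; while $M_i$ is not a minimal dominating set: choose a supported vertex $u_i\in M_i\setminus a(M_i)$ of least depth; let $A_{i+1}$ be the set of vertices of $a_1(M_i)$ adjacent to $u_i$; let $N_{i+1}$ be the set of vertices of $N_1(M_i)$ adjacent to a vertex of $A_{i+1}$; set $M_{i+1}=(M_i\setminus A_{i+1})\cup N_{i+1}$ and increase $i$ by one. When the loop ends, return $M_i$.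
   Context: A dominating set of a graph $G=(V,E)$ is a set $S\subseteq V$ such that every vertex is in $S$ or adjacent to a vertex of $S$; it is minimal if no proper subset is dominating. $N[u]=N(u)\cup\{u\}$ is the closed neighbourhood. For a dominating set $S$: $a(S)=\{u\in S: S\setminus\{u\}\text{ is not dominating}\}$ (critical vertices); vertices of $S\setminus a(S)$ are called supported; $N_1(S)=\{u\in V\setminus S: |N[u]\cap S|=1\}$; $a_1(S)=\{u\in a(S): N[u]\cap N_1(S)\ne\emptyset\}$. In a tree rooted at $v$, depth is the distance to $v$; $x$ is a descendant of $y$ if $y$ lies on the path from $x$ to $v$; the parent of $x\neq v$ is its neighbour on that path. *)

theory Defs
  imports Main
begin

text \<open>Simple graphs: vertex set V, adjacency relation E (symmetric, irreflexive, within V).\<close>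

definition closed_nbhd :: "'a set \<Rightarrow> ('a \<Rightarrow> 'a \<Rightarrow> bool) \<Rightarrow> 'a \<Rightarrow> 'a set" where
  "closed_nbhd V E u = {w \<in> V. w = u \<or> E u w}"

definition dominating :: "'a set \<Rightarrow> ('a \<Rightarrow> 'a \<Rightarrow> bool) \<Rightarrow> 'a set \<Rightarrow> bool" where
  "dominating V E S \<longleftrightarrow> S \<subseteq> V \<and> (\<forall>x\<in>V. x \<in> S \<or> (\<exists>s\<in>S. E x s))"

definition minimal_dominating :: "'a set \<Rightarrow> ('a \<Rightarrow> 'a \<Rightarrow> bool) \<Rightarrow> 'a set \<Rightarrow> bool" where
  "minimal_dominating V E S \<longleftrightarrow> dominating V E S \<and> (\<forall>S'. S' \<subset> S \<longrightarrow> \<not> dominating V E S')"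

text \<open>a(S): critical vertices\<close>
definition crit :: "'a set \<Rightarrow> ('a \<Rightarrow> 'a \<Rightarrow> bool) \<Rightarrow> 'a set \<Rightarrow> 'a set" where
  "crit V E S = {u \<in> S. \<not> dominating V E (S - {u})}"

definition supported :: "'a set \<Rightarrow> ('a \<Rightarrow> 'a \<Rightarrow> bool) \<Rightarrow> 'a set \<Rightarrow> 'a set" where
  "supported V E S = S - crit V E S"

definition N1 :: "'a set \<Rightarrow> ('a \<Rightarrow> 'a \<Rightarrow> bool) \<Rightarrow> 'a set \<Rightarrow> 'a set" where
  "N1 V E S = {u \<in> V - S. card (closed_nbhd V E u \<inter> S) = 1}"

definition a1 :: "'a set \<Rightarrow> ('a \<Rightarrow> 'a \<Rightarrow> bool) \<Rightarrow> 'a set \<Rightarrow> 'a set" where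
  "a1 V E S = {u \<in> crit V E S. closed_nbhd V E u \<inter> N1 V E S \<noteq> {}}"

definition is_path :: "'a set \<Rightarrow> ('a \<Rightarrow> 'a \<Rightarrow> bool) \<Rightarrow> 'a list \<Rightarrow> 'a \<Rightarrow> 'a \<Rightarrow> bool" where
  "is_path V E xs x y \<longleftrightarrow> xs \<noteq> [] \<and> distinct xs \<and> set xs \<subseteq> V \<and> hd xs = x \<and> last xs = y \<and>
     (\<forall>i. Suc i < length xs \<longrightarrow> E (xs ! i) (xs ! Suc i))"

definition is_tree :: "'a set \<Rightarrow> ('a \<Rightarrow> 'a \<Rightarrow> bool) \<Rightarrow> bool" where
  "is_tree V E \<longleftrightarrow> finite V \<and> V \<noteq> {} \<and>
     (\<forall>x y. E x y \<longrightarrow> x \<in> V \<and> y \<in> V \<and> E y x \<and> x \<noteq> y) \<and>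
     (\<forall>x\<in>V. \<forall>y\<in>V. \<exists>xs. is_path V E xs x y) \<and>
     \<not> (\<exists>xs. 3 \<le> length xs \<and> is_path V E xs (hd xs) (last xs) \<and> E (last xs) (hd xs))"

definition depth :: "'a set \<Rightarrow> ('a \<Rightarrow> 'a \<Rightarrow> bool) \<Rightarrow> 'a \<Rightarrow> 'a \<Rightarrow> nat" where
  "depth V E v x = (LEAST n. \<exists>xs. is_path V E xs x v \<and> length xs = Suc n)"

definition descendant :: "'a set \<Rightarrow> ('a \<Rightarrow> 'a \<Rightarrow> bool) \<Rightarrow> 'a \<Rightarrow> 'a \<Rightarrow> 'a \<Rightarrow> bool" where
  "descendant V E v x y \<longleftrightarrow> (\<exists>xs. is_path V E xs x v \<and> y \<in> set xs)"

definition is_parent :: "'a set \<Rightarrow> ('a \<Rightarrow> 'a \<Rightarrow> bool) \<Rightarrow> 'a \<Rightarrow> 'a \<Rightarrow> 'a \<Rightarrow> bool" where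
  "is_parent V E v x p \<longleftrightarrow> x \<noteq> v \<and> E x p \<and> (\<exists>xs. is_path V E xs x v \<and> p \<in> set xs)"

definition alg_step :: "'a set \<Rightarrow> ('a \<Rightarrow> 'a \<Rightarrow> bool) \<Rightarrow> 'a \<Rightarrow> 'a set \<Rightarrow> 'a set \<Rightarrow> bool" where
  "alg_step V E v M M' \<longleftrightarrow> \<not> minimal_dominating V E M \<and>
     (\<exists>u. u \<in> supported V E M \<and> (\<forall>w\<in>supported V E M. depth V E v u \<le> depth V E v w) \<and>
        (let A = {x \<in> a1 V E M. E x u};
             N = {y \<in> N1 V E M. \<exists>x\<in>A. E y x}
         in M' = (M - A) \<union> N))"

end

theory Submission
  imports Defs "HOL-Library.Sublist"
begin

(* Call a dominating set admissible if it satisfies (a) and (b). Take one step of the algorithm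
   from an admissible M, with u the chosen supported vertex of least depth. By (a) every
   neighbour of u in M is a child of u and is critical, so A consists of all children of u in M,
   each having a private neighbour in N. These private neighbours inject A into N, so the size
   does not drop, and the new set M' is again dominating. A vertex x that becomes supported in M'
   must have lost its private neighbour z to a vertex w of N, which forces a chain of parents
   x, z, w, c, u: x lies four levels below u and its parent z is not in M'. This preserves (a)
   and (b), and since u loses its support, the least depth of a supported vertex never decreases
   and the number of supported vertices at that depth drops while it stays the same. Hence the
   algorithm terminates, and it can only stop at a set without supported vertices, that is, at a
   minimal dominating set. *)

section \<open>Paths\<close>

lemma distinct_singleton_if_hd_eq_last:
  "distinct xs \<Longrightarrow> xs \<noteq> [] \<Longrightarrow> hd xs = last xs \<Longrightarrow> xs = [hd xs]"
  by (cases xs) (auto simp: last_in_set split: if_splits)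

lemma successively_take_drop:
  assumes "successively P xs" shows "successively P (take k xs)" "successively P (drop k xs)"
  using assms successively_append_iff[of P "take k xs" "drop k xs"] by simp_all

lemma is_path_conv_successively:
  "is_path V E xs x y \<longleftrightarrow>
     xs \<noteq> [] \<and> distinct xs \<and> set xs \<subseteq> V \<and> hd xs = x \<and> last xs = y \<and> successively E xs"
  unfolding is_path_def successively_conv_nth by blast

lemma is_path_ends_in_V:
  assumes "is_path V E xs x y" shows "x \<in> V" "y \<in> V"
  using assms hd_in_set[of xs] last_in_set[of xs] unfolding is_path_def by blast+

lemma is_path_drop:
  assumes "is_path V E xs x y" "k < length xs"
  shows "is_path V E (drop k xs) (xs ! k) y"
  unfolding is_path_conv_successively
proof (intro conjI)
  show "drop k xs \<noteq> []" "last (drop k xs) = y" "hd (drop k xs) = xs ! k"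
    using assms unfolding is_path_def by (simp_all add: hd_drop_conv_nth)
  show "distinct (drop k xs)" "set (drop k xs) \<subseteq> V"
    using assms set_drop_subset[of k xs] unfolding is_path_def by auto
  show "successively E (drop k xs)"
    using assms successively_take_drop(2) unfolding is_path_conv_successively by blast
qed

lemma is_path_take:
  assumes "is_path V E xs x y" "k < length xs"
  shows "is_path V E (take (Suc k) xs) x (xs ! k)"
  unfolding is_path_conv_successively
proof (intro conjI)
  show "take (Suc k) xs \<noteq> []" "hd (take (Suc k) xs) = x" "last (take (Suc k) xs) = xs ! k"
    using assms unfolding is_path_def by (simp_all add: last_conv_nth)
  show "distinct (take (Suc k) xs)" "set (take (Suc k) xs) \<subseteq> V"
    using assms set_take_subset[of "Suc k" xs] unfolding is_path_def by auto
  show "successively E (take (Suc k) xs)"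
    using assms successively_take_drop(1) unfolding is_path_conv_successively by blast
qed

lemma is_path_split:
  assumes "is_path V E (xs @ w # ys) a b"
  shows "is_path V E (xs @ [w]) a w" "is_path V E (w # ys) w b"
  using is_path_take[OF assms, of "length xs"] is_path_drop[OF assms, of "length xs"] by simp_all

lemma is_path_rev:
  assumes sym: "\<And>x y. E x y \<Longrightarrow> E y x" and "is_path V E xs x y"
  shows "is_path V E (rev xs) y x"
proof -
  have "successively E (rev xs)"
    using assms(2) successively_mono[of E xs "\<lambda>x y. E y x"] sym
    unfolding is_path_conv_successively successively_rev by blast
  then show ?thesis
    using assms(2) unfolding is_path_conv_successively by (simp add: hd_rev last_rev)
qed

lemma is_path_append:
  assumes "is_path V E xs a b" "is_path V E ys c d" "E b c" "set xs \<inter> set ys = {}"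
  shows "is_path V E (xs @ ys) a d"
  using assms unfolding is_path_conv_successively by (simp add: successively_append_iff)

lemma is_path_decomp:
  assumes "is_path V E xs a b" "a \<noteq> b"
  obtains mid where "xs = a # mid @ [b]"
proof -
  obtain xs' where xs': "xs = a # xs'"
    using assms unfolding is_path_def by (cases xs) auto
  with assms have "xs' \<noteq> []" "last xs' = b"
    unfolding is_path_def by auto
  then show ?thesis
    using that xs' append_butlast_last_id by metis
qed

section \<open>Rooted trees\<close>

locale rooted_tree =
  fixes V :: "'a set" and E :: "'a \<Rightarrow> 'a \<Rightarrow> bool" and v :: 'a
  assumes tree: "is_tree V E" and root_in_V: "v \<in> V"
begin

lemma finite_V: "finite V"
  using tree unfolding is_tree_def by blast

lemma edge_sym: "E x y \<Longrightarrow> E y x"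
  using tree unfolding is_tree_def by blast

lemma edge_irrefl: "E x y \<Longrightarrow> x \<noteq> y"
  using tree unfolding is_tree_def by blast

lemma edge_in_V: "E x y \<Longrightarrow> x \<in> V" "E x y \<Longrightarrow> y \<in> V"
  using tree unfolding is_tree_def by blast+

lemma connected: "x \<in> V \<Longrightarrow> y \<in> V \<Longrightarrow> \<exists>xs. is_path V E xs x y"
  using tree unfolding is_tree_def by blast

lemma no_cycle: "is_path V E xs a b \<Longrightarrow> 3 \<le> length xs \<Longrightarrow> \<not> E b a"
  using tree unfolding is_tree_def is_path_def by blast

lemma internally_disjoint_paths_eq:
  assumes xs: "is_path V E xs a b" and ys: "is_path V E ys a b"
    and disj: "set xs \<inter> set ys \<subseteq> {a, b}"
  shows "xs = ys"
proof (cases "a = b")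
  case True
  then show ?thesis
    using xs ys distinct_singleton_if_hd_eq_last unfolding is_path_def by metis
next
  case False
  obtain xmid ymid where xs_eq: "xs = a # xmid @ [b]" and ys_eq: "ys = a # ymid @ [b]"
    using is_path_decomp[OF xs False] is_path_decomp[OF ys False] by metis
  show ?thesis
  proof (cases ymid)
    case Nil
    then have "E b a"
      using ys unfolding ys_eq is_path_conv_successively by (simp add: edge_sym)
    then have "xmid = []"
      using no_cycle[OF xs] unfolding xs_eq by (cases xmid) auto
    then show ?thesis
      unfolding xs_eq ys_eq Nil by simp
  next
    case (Cons m ymid')
    have succ: "successively E (a # ymid @ [b])" and ymid_V: "set ymid \<subseteq> V" and "distinct ymid"
      using ys unfolding ys_eq is_path_conv_successively by auto
    have "ymid \<noteq> []"
      using Cons by simp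
    have "successively E (ymid @ [b])" "E a m"
      using succ Cons by (simp_all add: successively_Cons)
    then have "successively E ymid" "E (last ymid) b"
      using successively_append_iff[of E ymid "[b]"] \<open>ymid \<noteq> []\<close> by simp_all
    then have ymid: "is_path V E ymid m (last ymid)"
      using ymid_V \<open>distinct ymid\<close> Cons unfolding is_path_conv_successively by simp
    have "set xs \<inter> set (rev ymid) = {}"
      using disj ys unfolding ys_eq is_path_def by auto
    then have "is_path V E (xs @ rev ymid) a m"
      using is_path_append[OF xs is_path_rev[OF edge_sym ymid] edge_sym[OF \<open>E (last ymid) b\<close>]]
      by simp
    moreover have "3 \<le> length (xs @ rev ymid)"
      using xs_eq Cons by simp
    ultimately show ?thesis
      using no_cycle edge_sym[OF \<open>E a m\<close>] by blast
  qed
qed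

lemma is_path_unique: "is_path V E xs a b \<Longrightarrow> is_path V E ys a b \<Longrightarrow> xs = ys"
proof (induction "length xs + length ys" arbitrary: xs ys a b rule: less_induct)
  case less
  show ?case
  proof (cases "\<exists>w \<in> set xs \<inter> set ys. w \<noteq> a \<and> w \<noteq> b")
    case True
    then obtain w xs1 xs2 ys1 ys2 where w: "w \<noteq> a" "w \<noteq> b"
      and xs: "xs = xs1 @ w # xs2" and ys: "ys = ys1 @ w # ys2"
      by (auto simp: in_set_conv_decomp)
    have ne: "xs1 \<noteq> []" "xs2 \<noteq> []" "ys1 \<noteq> []" "ys2 \<noteq> []"
      using less.prems w unfolding xs ys is_path_def by auto
    have "xs1 @ [w] = ys1 @ [w]"
      using less.hyps[OF _ is_path_split(1)[OF less.prems(1)[unfolded xs]]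
          is_path_split(1)[OF less.prems(2)[unfolded ys]]] ne xs ys by simp
    moreover have "w # xs2 = w # ys2"
      using less.hyps[OF _ is_path_split(2)[OF less.prems(1)[unfolded xs]]
          is_path_split(2)[OF less.prems(2)[unfolded ys]]] ne xs ys by simp
    ultimately show ?thesis
      using xs ys by simp
  next
    case False
    then show ?thesis
      using internally_disjoint_paths_eq[OF less.prems] by blast
  qed
qed

definition root_path :: "'a \<Rightarrow> 'a list" where
  "root_path x = (THE xs. is_path V E xs x v)"

lemma root_path: "x \<in> V \<Longrightarrow> is_path V E (root_path x) x v"
  unfolding root_path_def
proof (rule theI')
  assume "x \<in> V"
  then show "\<exists>!xs. is_path V E xs x v"
    using connected root_in_V is_path_unique by blast
qed

lemma root_path_eqI:
  assumes "is_path V E xs x v"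
  shows "root_path x = xs"
  using is_path_unique[OF root_path[OF is_path_ends_in_V(1)[OF assms]] assms] .

lemma root_path_hd: "x \<in> V \<Longrightarrow> hd (root_path x) = x"
  using root_path[of x] unfolding is_path_def by simp

lemma root_path_nonempty: "x \<in> V \<Longrightarrow> root_path x \<noteq> []"
  using root_path[of x] unfolding is_path_def by simp

lemma root_path_root: "root_path v = [v]"
  by (rule root_path_eqI) (simp add: is_path_def root_in_V)

lemma root_path_drop:
  assumes "x \<in> V" "k < length (root_path x)"
  shows "root_path (root_path x ! k) = drop k (root_path x)"
  using root_path_eqI[OF is_path_drop[OF root_path[OF assms(1)] assms(2)]] .

lemma mem_root_path_iff:
  assumes "x \<in> V"
  shows "y \<in> set (root_path x) \<longleftrightarrow> y \<in> V \<and> suffix (root_path y) (root_path x)"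
proof
  assume y: "y \<in> set (root_path x)"
  then obtain k where k: "k < length (root_path x)" "y = root_path x ! k"
    by (auto simp: in_set_conv_nth)
  have "y \<in> V"
    using y root_path[OF assms] unfolding is_path_def by blast
  moreover have "root_path y = drop k (root_path x)"
    using root_path_drop[OF assms k(1)] k(2) by simp
  ultimately show "y \<in> V \<and> suffix (root_path y) (root_path x)"
    by (simp add: suffix_drop)
next
  assume y: "y \<in> V \<and> suffix (root_path y) (root_path x)"
  then have "y \<in> set (root_path y)"
    using hd_in_set[OF root_path_nonempty] root_path_hd by metis
  then show "y \<in> set (root_path x)"
    using set_mono_suffix y by blast
qed

lemma descendant_iff_suffix:
  "descendant V E v x y \<longleftrightarrow> x \<in> V \<and> y \<in> V \<and> suffix (root_path y) (root_path x)"
proof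
  assume "descendant V E v x y"
  then obtain xs where xs: "is_path V E xs x v" "y \<in> set xs"
    unfolding descendant_def by blast
  then have "x \<in> V" "y \<in> set (root_path x)"
    using is_path_ends_in_V(1) root_path_eqI by simp_all
  then show "x \<in> V \<and> y \<in> V \<and> suffix (root_path y) (root_path x)"
    using mem_root_path_iff by blast
next
  assume "x \<in> V \<and> y \<in> V \<and> suffix (root_path y) (root_path x)"
  then show "descendant V E v x y"
    unfolding descendant_def using root_path mem_root_path_iff by blast
qed

lemma depth_eq:
  assumes "x \<in> V"
  shows "depth V E v x = length (root_path x) - 1"
  unfolding depth_def
proof (rule Least_equality)
  show "\<exists>xs. is_path V E xs x v \<and> length xs = Suc (length (root_path x) - 1)"
    using root_path[OF assms] root_path_nonempty[OF assms] by auto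
next
  fix n
  assume "\<exists>xs. is_path V E xs x v \<and> length xs = Suc n"
  then obtain xs where "is_path V E xs x v" "length xs = Suc n"
    by blast
  then show "length (root_path x) - 1 \<le> n"
    using root_path_eqI by simp
qed

lemma root_path_Cons:
  assumes "E x y" "x \<notin> set (root_path y)"
  shows "root_path x = x # root_path y"
proof (rule root_path_eqI)
  have "x \<in> V" "y \<in> V"
    using edge_in_V assms(1) by blast+
  then show "is_path V E (x # root_path y) x v"
    using root_path[of y] root_path_hd[of y] root_path_nonempty[of y] assms
    unfolding is_path_conv_successively by (simp add: successively_Cons)
qed

lemma root_path_inj: "x \<in> V \<Longrightarrow> y \<in> V \<Longrightarrow> root_path x = root_path y \<Longrightarrow> x = y"
  using root_path_hd by metis

lemma mem_root_path_antisym: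
  assumes "x \<in> V" "y \<in> V" "x \<in> set (root_path y)" "y \<in> set (root_path x)"
  shows "x = y"
proof -
  have "root_path x = root_path y"
    using assms mem_root_path_iff suffix_order.antisym by blast
  then show ?thesis
    using root_path_inj assms(1,2) by blast
qed

lemma is_parent_iff: "is_parent V E v x p \<longleftrightarrow> E x p \<and> root_path x = x # root_path p"
proof
  assume "is_parent V E v x p"
  then have "E x p" "p \<in> set (root_path x)"
    using root_path_eqI unfolding is_parent_def by blast+
  then have "x \<notin> set (root_path p)"
    using mem_root_path_antisym edge_in_V[OF \<open>E x p\<close>] edge_irrefl[OF \<open>E x p\<close>] by blast
  then show "E x p \<and> root_path x = x # root_path p"
    using \<open>E x p\<close> root_path_Cons by blast
next
  assume parent: "E x p \<and> root_path x = x # root_path p"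
  have V: "x \<in> V" "p \<in> V"
    using edge_in_V parent by blast+
  have "x \<noteq> v"
    using parent root_path_root root_path_nonempty[OF V(2)] by auto
  moreover have "p \<in> set (root_path x)"
    using parent hd_in_set[OF root_path_nonempty[OF V(2)]] root_path_hd[OF V(2)] by simp
  ultimately show "is_parent V E v x p"
    unfolding is_parent_def using root_path[OF V(1)] parent by blast
qed

lemma edge_parent_cases:
  assumes "E x y"
  shows "is_parent V E v x y \<or> is_parent V E v y x"
proof (cases "x \<in> set (root_path y)")
  case True
  then have "y \<notin> set (root_path x)"
    using mem_root_path_antisym edge_in_V[OF assms] edge_irrefl[OF assms] by blast
  then have "root_path y = y # root_path x"
    using root_path_Cons[OF edge_sym[OF assms]] by blast
  then show ?thesis
    using edge_sym assms is_parent_iff by blast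
next
  case False
  then show ?thesis
    using root_path_Cons assms is_parent_iff by blast
qed

lemma parent_unique: "is_parent V E v x p \<Longrightarrow> is_parent V E v x q \<Longrightarrow> p = q"
  unfolding is_parent_iff using root_path_inj edge_in_V(2) by (metis list.inject)

lemma parent_of_neighbour:
  "is_parent V E v x p \<Longrightarrow> E x y \<Longrightarrow> y \<noteq> p \<Longrightarrow> is_parent V E v y x"
  using edge_parent_cases parent_unique by blast

lemma depth_parent:
  assumes "is_parent V E v x p"
  shows "depth V E v x = Suc (depth V E v p)"
proof -
  have "x \<in> V" "p \<in> V" "root_path x = x # root_path p"
    using assms edge_in_V unfolding is_parent_iff by blast+
  then show ?thesis
    using depth_eq root_path_nonempty by simp
qed

lemma descendant_parent: "is_parent V E v x p \<Longrightarrow> descendant V E v x p"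
  unfolding is_parent_iff descendant_iff_suffix using edge_in_V by (metis suffix_tl list.sel(3))

lemma descendant_trans:
  "descendant V E v x y \<Longrightarrow> descendant V E v y z \<Longrightarrow> descendant V E v x z"
  unfolding descendant_iff_suffix using suffix_order.trans by blast

lemma descendant_cases:
  "descendant V E v x y \<Longrightarrow> descendant V E v x z \<Longrightarrow> descendant V E v y z \<or> descendant V E v z y"
  unfolding descendant_iff_suffix using suffix_same_cases by blast

lemma depth_less_if_descendant:
  assumes "descendant V E v x y" "x \<noteq> y"
  shows "depth V E v y < depth V E v x"
proof -
  have V: "x \<in> V" "y \<in> V" and "suffix (root_path y) (root_path x)"
    using assms(1) unfolding descendant_iff_suffix by blast+
  moreover have "root_path y \<noteq> root_path x"
    using root_path_inj V assms(2) by blast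
  ultimately have "length (root_path y) < length (root_path x)"
    using suffix_length_less unfolding strict_suffix_def by blast
  moreover have "root_path y \<noteq> []"
    using root_path_nonempty V by blast
  ultimately show ?thesis
    unfolding depth_eq[OF V(1)] depth_eq[OF V(2)] by (cases "root_path y") auto
qed

end

section \<open>Dominating sets\<close>

lemma supported_iff: "x \<in> supported V E S \<longleftrightarrow> x \<in> S \<and> dominating V E (S - {x})"
  unfolding supported_def crit_def by blast

lemma dominating_mono: "dominating V E S \<Longrightarrow> S \<subseteq> S' \<Longrightarrow> S' \<subseteq> V \<Longrightarrow> dominating V E S'"
  unfolding dominating_def by blast

lemma N1_iff:
  assumes "S \<subseteq> V"
  shows "y \<in> N1 V E S \<longleftrightarrow> y \<in> V \<and> y \<notin> S \<and> (\<exists>!s. s \<in> S \<and> E y s)"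
proof (cases "y \<in> V \<and> y \<notin> S")
  case True
  then have "closed_nbhd V E y \<inter> S = {s \<in> S. E y s}"
    unfolding closed_nbhd_def using assms by blast
  moreover have "card {s \<in> S. E y s} = 1 \<longleftrightarrow> (\<exists>!s. s \<in> S \<and> E y s)"
    unfolding is_singleton_altdef[symmetric] is_singleton_iff_ex1 by simp
  ultimately show ?thesis
    using True unfolding N1_def by simp
next
  case False
  then show ?thesis
    unfolding N1_def by blast
qed

context rooted_tree
begin

lemma critical_in_a1:
  assumes dom: "dominating V E S" and c: "c \<in> S" "c \<notin> supported V E S" and s: "s \<in> S" "E c s"
  shows "c \<in> a1 V E S"
proof -
  have "S \<subseteq> V"
    using dom unfolding dominating_def by blast
  have "\<not> dominating V E (S - {c})"
    using c unfolding supported_iff by blast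
  then obtain z where z: "z \<in> V" "z \<notin> S - {c}" "\<forall>s \<in> S - {c}. \<not> E z s"
    using \<open>S \<subseteq> V\<close> unfolding dominating_def by blast
  have "s \<in> S - {c}"
    using s edge_irrefl by blast
  then have "z \<noteq> c"
    using z(3) s(2) by blast
  then have "z \<notin> S"
    using z(2) by blast
  then obtain s' where "s' \<in> S" "E z s'"
    using dom z(1) unfolding dominating_def by blast
  then have "E z c" "\<forall>s \<in> S. E z s \<longrightarrow> s = c"
    using z(3) by blast+
  then have "z \<in> N1 V E S"
    unfolding N1_iff[OF \<open>S \<subseteq> V\<close>] using z(1) \<open>z \<notin> S\<close> c(1) by blast
  moreover have "z \<in> closed_nbhd V E c"
    unfolding closed_nbhd_def using z(1) edge_sym[OF \<open>E z c\<close>] by blast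
  ultimately show ?thesis
    using c unfolding a1_def crit_def supported_def by blast
qed

definition supported_parents_outside :: "'a set \<Rightarrow> bool" where
  "supported_parents_outside S \<longleftrightarrow> (\<forall>s \<in> supported V E S. \<forall>p. is_parent V E v s p \<longrightarrow> p \<notin> S)"

definition supported_incomparable :: "'a set \<Rightarrow> bool" where
  "supported_incomparable S \<longleftrightarrow>
     (\<forall>s \<in> supported V E S. \<forall>t \<in> supported V E S. s \<noteq> t \<longrightarrow> \<not> descendant V E v s t)"

definition admissible :: "'a set \<Rightarrow> bool" where
  "admissible S \<longleftrightarrow> dominating V E S \<and> supported_parents_outside S \<and> supported_incomparable S"

definition min_supported_depth :: "'a set \<Rightarrow> nat" where
  "min_supported_depth S = Min (depth V E v ` supported V E S)"

\<comment> \<open>The first component is a decreasing proxy for the least depth of a supported vertex.\<close>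
definition potential :: "'a set \<Rightarrow> nat \<times> nat" where
  "potential S =
     (card {x \<in> V. min_supported_depth S \<le> depth V E v x},
      card {x \<in> supported V E S. depth V E v x = min_supported_depth S})"

end

section \<open>One step of the algorithm\<close>

locale algorithm_step = rooted_tree +
  fixes M :: "'a set" and u :: 'a
  assumes admissible: "admissible M"
    and u_supported: "u \<in> supported V E M"
    and u_min_depth: "\<And>w. w \<in> supported V E M \<Longrightarrow> depth V E v u \<le> depth V E v w"
begin

definition A :: "'a set" where
  "A = {x \<in> a1 V E M. E x u}"

definition N :: "'a set" where
  "N = {y \<in> N1 V E M. \<exists>x \<in> A. E y x}"

definition M' :: "'a set" where
  "M' = (M - A) \<union> N"

lemma dominating: "dominating V E M"
  and parents_outside: "\<And>s p. s \<in> supported V E M \<Longrightarrow> is_parent V E v s p \<Longrightarrow> p \<notin> M"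
  and incomparable: "\<And>s t. s \<in> supported V E M \<Longrightarrow> t \<in> supported V E M \<Longrightarrow> s \<noteq> t \<Longrightarrow>
    \<not> descendant V E v s t"
  using admissible
  unfolding admissible_def supported_parents_outside_def supported_incomparable_def by blast+

lemma M_subset_V: "M \<subseteq> V"
  using dominating unfolding dominating_def by blast

lemma u_in_M: "u \<in> M"
  using u_supported unfolding supported_def by blast

lemma neighbour_of_u_is_child: "c \<in> M \<Longrightarrow> E c u \<Longrightarrow> is_parent V E v c u"
  using edge_parent_cases[of u c] edge_sym parents_outside[OF u_supported] by blast

lemma A_eq: "A = {c \<in> M. E c u}"
proof
  show "A \<subseteq> {c \<in> M. E c u}"
    unfolding A_def a1_def crit_def by blast
next
  show "{c \<in> M. E c u} \<subseteq> A"
  proof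
    fix c
    assume c: "c \<in> {c \<in> M. E c u}"
    then have "c \<notin> supported V E M"
      using parents_outside neighbour_of_u_is_child u_in_M by blast
    then show "c \<in> A"
      using critical_in_a1[OF dominating _ _ u_in_M] c unfolding A_def by blast
  qed
qed

lemma A_parent: "c \<in> A \<Longrightarrow> is_parent V E v c u"
  using A_eq neighbour_of_u_is_child by blast

lemma u_notin_A: "u \<notin> A"
  using A_eq edge_irrefl by blast

lemma N_elim:
  assumes "y \<in> N"
  obtains c where "c \<in> A" "E y c" "is_parent V E v y c" "y \<notin> M" "\<forall>s \<in> M. E y s \<longrightarrow> s = c"
proof -
  obtain c where c: "c \<in> A" "E y c" and y: "y \<in> N1 V E M"
    using assms unfolding N_def by blast
  have "c \<in> M"
    using c(1) A_eq by blast
  have "y \<notin> M" "\<forall>s \<in> M. E y s \<longrightarrow> s = c"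
    using y c(2) \<open>c \<in> M\<close> unfolding N1_iff[OF M_subset_V] by blast+
  moreover have "y \<noteq> u"
    using \<open>y \<notin> M\<close> u_in_M by blast
  then have "is_parent V E v y c"
    using parent_of_neighbour[OF A_parent[OF c(1)] edge_sym[OF c(2)]] by blast
  ultimately show ?thesis
    using that c by blast
qed

lemma u_in_M': "u \<in> M'"
  unfolding M'_def using u_in_M u_notin_A by blast

lemma M'_subset_V: "M' \<subseteq> V"
  unfolding M'_def N_def using M_subset_V N1_iff[OF M_subset_V] by blast

lemma dominating_M': "dominating V E M'"
  unfolding dominating_def
proof (intro conjI ballI M'_subset_V)
  fix x
  assume "x \<in> V"
  show "x \<in> M' \<or> (\<exists>s \<in> M'. E x s)"
  proof (cases "x \<in> M' \<or> x \<in> A")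
    case True
    then show ?thesis
      using A_eq u_in_M' by blast
  next
    case False
    then have "x \<notin> M" "x \<notin> N"
      unfolding M'_def by blast+
    then obtain s where s: "s \<in> M" "E x s"
      using dominating \<open>x \<in> V\<close> unfolding dominating_def by blast
    show ?thesis
    proof (cases "s \<in> A")
      case False
      then show ?thesis
        using s unfolding M'_def by blast
    next
      case True
      then have "x \<notin> N1 V E M"
        using \<open>x \<notin> N\<close> s(2) unfolding N_def by blast
      then obtain s' where s': "s' \<in> M" "E x s'" "s' \<noteq> s"
        using N1_iff[OF M_subset_V] \<open>x \<in> V\<close> \<open>x \<notin> M\<close> s by blast
      have "s' \<notin> A"
      proof
        assume "s' \<in> A"
        have "x \<noteq> u"
          using \<open>x \<notin> M\<close> u_in_M by blast
        then have "is_parent V E v x s" "is_parent V E v x s'"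
          using parent_of_neighbour A_parent \<open>s \<in> A\<close> \<open>s' \<in> A\<close> s(2) s'(2) edge_sym by blast+
        then show False
          using parent_unique s'(3) by blast
      qed
      then show ?thesis
        using s' unfolding M'_def by blast
    qed
  qed
qed

lemma card_le_card_M': "card M \<le> card M'"
proof -
  have fin: "finite M" "finite N"
    using M_subset_V M'_subset_V finite_V finite_subset unfolding M'_def by blast+
  have "\<exists>y. y \<in> N \<and> E c y" if "c \<in> A" for c
  proof -
    obtain y where y: "y \<in> closed_nbhd V E c" "y \<in> N1 V E M"
      using \<open>c \<in> A\<close> unfolding A_def a1_def by blast
    have "c \<in> M"
      using \<open>c \<in> A\<close> A_eq by blast
    then have "y \<noteq> c"
      using y(2) N1_iff[OF M_subset_V] by blast
    then have "E c y"
      using y(1) unfolding closed_nbhd_def by blast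
    then have "y \<in> N"
      using y(2) \<open>c \<in> A\<close> edge_sym unfolding N_def by blast
    then show ?thesis
      using \<open>E c y\<close> by blast
  qed
  then obtain f where f: "\<forall>c \<in> A. f c \<in> N \<and> E c (f c)"
    by metis
  have "inj_on f A"
  proof (rule inj_onI)
    fix c d
    assume cd: "c \<in> A" "d \<in> A" "f c = f d"
    then have "f c \<in> N"
      using f by blast
    then obtain c0 where "\<forall>s \<in> M. E (f c) s \<longrightarrow> s = c0"
      by (rule N_elim)
    moreover have "c \<in> M" "d \<in> M" "E (f c) c" "E (f c) d"
      using cd f A_eq edge_sym by auto
    ultimately show "c = d"
      by blast
  qed
  moreover have "f ` A \<subseteq> N"
    using f by blast
  ultimately have "card A \<le> card N"
    using card_inj_on_le fin(2) by blast
  moreover have "N \<inter> M = {}" "A \<subseteq> M"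
    unfolding N_def N1_def A_eq by blast+
  then have "card M' = card (M - A) + card N" "card M = card (M - A) + card A"
    using fin card_Un_disjoint[of "M - A" A] card_Un_disjoint[of "M - A" N] finite_subset
    unfolding M'_def by (auto simp: Un_absorb2)
  ultimately show ?thesis
    by linarith
qed

lemma u_not_supported_M': "u \<notin> supported V E M'"
proof
  assume "u \<in> supported V E M'"
  then have "dominating V E (M' - {u})"
    unfolding supported_iff by blast
  then obtain w where w: "w \<in> M' - {u}" "E u w"
    using u_in_M M_subset_V edge_irrefl unfolding dominating_def by blast
  show False
  proof (cases "w \<in> N")
    case True
    then obtain c where "c \<in> A" "\<forall>s \<in> M. E w s \<longrightarrow> s = c"
      by (rule N_elim)
    then show False
      using u_in_M u_notin_A edge_sym[OF w(2)] by blast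
  next
    case False
    then show False
      using w A_eq edge_sym unfolding M'_def by blast
  qed
qed

lemma N_not_supported_M': "x \<in> N \<Longrightarrow> x \<notin> supported V E M'"
proof
  assume "x \<in> N" "x \<in> supported V E M'"
  obtain c where c: "c \<in> A" "is_parent V E v x c" "x \<notin> M" "\<forall>s \<in> M. E x s \<longrightarrow> s = c"
    using \<open>x \<in> N\<close> by (rule N_elim)
  have "x \<in> V"
    using \<open>x \<in> N\<close> M'_subset_V unfolding M'_def by blast
  have "dominating V E (M' - {x})"
    using \<open>x \<in> supported V E M'\<close> unfolding supported_iff by blast
  then obtain w where w: "w \<in> M' - {x}" "E x w"
    using \<open>x \<in> V\<close> unfolding dominating_def by blast
  show False
  proof (cases "w \<in> N")
    case True
    then obtain c' where c': "c' \<in> A" "is_parent V E v w c'" "w \<notin> M"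
      by (rule N_elim)
    have "w \<noteq> c"
      using c(1) A_eq c'(3) by blast
    then have "is_parent V E v w x"
      using parent_of_neighbour[OF c(2) w(2)] by blast
    then show False
      using parent_unique[OF c'(2)] c'(1) A_eq \<open>x \<notin> M\<close> by blast
  next
    case False
    then show False
      using w c unfolding M'_def by blast
  qed
qed

lemma newly_supported_private_neighbour:
  assumes x: "x \<in> supported V E M'" "x \<notin> supported V E M"
  obtains z w where "x \<in> M" "x \<notin> A" "w \<in> N" "E z w" "E z x" "z \<notin> M"
    "\<forall>s \<in> M. E z s \<longrightarrow> s = x"
proof -
  have "x \<in> M" "x \<notin> A"
    using x N_not_supported_M' unfolding M'_def supported_def by blast+
  then have "\<not> dominating V E (M - {x})"
    using x(2) unfolding supported_iff by blast
  then obtain z where z: "z \<in> V" "z \<notin> M - {x}" "\<forall>s \<in> M - {x}. \<not> E z s"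
    using M_subset_V unfolding dominating_def by blast
  have "dominating V E (M' - {x})"
    using x(1) unfolding supported_iff by blast
  then have "z \<in> M' - {x} \<or> (\<exists>w \<in> M' - {x}. E z w)"
    using z(1) unfolding dominating_def by blast
  moreover have "z \<notin> M' - {x}"
  proof
    assume "z \<in> M' - {x}"
    then have "z \<in> N"
      using z(2) unfolding M'_def by blast
    then obtain c where "c \<in> A" "E z c"
      by (rule N_elim)
    then show False
      using z(3) A_eq \<open>x \<notin> A\<close> by blast
  qed
  ultimately obtain w where w: "w \<in> M' - {x}" "E z w"
    by blast
  then have "w \<in> N"
    using z(3) edge_sym unfolding M'_def by blast
  then obtain c where c: "c \<in> A" "\<forall>s \<in> M. E w s \<longrightarrow> s = c"
    by (rule N_elim)
  have "z \<noteq> x"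
    using c w(2) \<open>x \<in> M\<close> \<open>x \<notin> A\<close> edge_sym by blast
  then have "z \<notin> M"
    using z(2) by blast
  then have "E z x" "\<forall>s \<in> M. E z s \<longrightarrow> s = x"
    using dominating z unfolding dominating_def by blast+
  then show ?thesis
    using that \<open>x \<in> M\<close> \<open>x \<notin> A\<close> \<open>w \<in> N\<close> w(2) \<open>z \<notin> M\<close> by blast
qed

lemma newly_supported_chain:
  assumes "x \<in> supported V E M'" "x \<notin> supported V E M"
  obtains c w z where "c \<in> A" "is_parent V E v w c" "is_parent V E v z w"
    "is_parent V E v x z" "z \<notin> M'"
proof -
  obtain z w where x: "x \<in> M" "x \<notin> A" and "w \<in> N" "E z w"
    and z: "E z x" "z \<notin> M" "\<forall>s \<in> M. E z s \<longrightarrow> s = x"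
    using assms by (rule newly_supported_private_neighbour)
  obtain c where c: "c \<in> A" "is_parent V E v w c" "w \<notin> M"
    using \<open>w \<in> N\<close> by (rule N_elim)
  have "z \<notin> N"
  proof
    assume "z \<in> N"
    then obtain c' where "c' \<in> A" "\<forall>s \<in> M. E z s \<longrightarrow> s = c'"
      by (rule N_elim)
    then show False
      using z x by blast
  qed
  have "is_parent V E v z w"
    using parent_of_neighbour[OF c(2) edge_sym[OF \<open>E z w\<close>]] c(1) A_eq z(2) by blast
  moreover have "is_parent V E v x z"
    using parent_of_neighbour[OF calculation z(1)] c(3) x(1) by blast
  moreover have "z \<notin> M'"
    using z(2) \<open>z \<notin> N\<close> unfolding M'_def by blast
  ultimately show ?thesis
    using that c(1,2) by blast
qed

lemma supported_M'_cases:
  assumes "x \<in> supported V E M'"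
  shows "x \<in> supported V E M \<and> x \<noteq> u \<or>
    (\<exists>z. is_parent V E v x z \<and> z \<notin> M' \<and> descendant V E v x u \<and>
      depth V E v x = depth V E v u + 4)"
proof (cases "x \<in> supported V E M")
  case True
  then show ?thesis
    using assms u_not_supported_M' by blast
next
  case False
  obtain c w z where parents: "c \<in> A" "is_parent V E v w c" "is_parent V E v z w"
    "is_parent V E v x z" "z \<notin> M'"
    using assms False by (rule newly_supported_chain)
  have "is_parent V E v c u"
    using parents(1) by (rule A_parent)
  then have "descendant V E v x u" "depth V E v x = depth V E v u + 4"
    using parents descendant_parent descendant_trans depth_parent by (metis, simp)
  then show ?thesis
    using parents(4,5) by blast
qed

lemma supported_parents_outside_M': "supported_parents_outside M'"
  unfolding supported_parents_outside_def
proof (intro ballI allI impI)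
  fix x p
  assume x: "x \<in> supported V E M'" and p: "is_parent V E v x p"
  from supported_M'_cases[OF x] show "p \<notin> M'"
  proof
    assume old: "x \<in> supported V E M \<and> x \<noteq> u"
    then have "p \<notin> M"
      using parents_outside p by blast
    moreover have "p \<notin> N"
    proof
      assume "p \<in> N"
      then obtain c where "c \<in> A" "is_parent V E v p c"
        by (rule N_elim)
      then have "descendant V E v x u"
        using p A_parent descendant_parent descendant_trans by metis
      then show False
        using incomparable old u_supported by blast
    qed
    ultimately show "p \<notin> M'"
      unfolding M'_def by blast
  next
    assume "\<exists>z. is_parent V E v x z \<and> z \<notin> M' \<and> descendant V E v x u \<and>
      depth V E v x = depth V E v u + 4"
    then show "p \<notin> M'"
      using parent_unique p by blast
  qed
qed

lemma supported_incomparable_M': "supported_incomparable M'"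
  unfolding supported_incomparable_def
proof (intro ballI impI notI)
  fix s t
  assume s: "s \<in> supported V E M'" and t: "t \<in> supported V E M'" and "s \<noteq> t"
    and st: "descendant V E v s t"
  consider "s \<in> supported V E M" "s \<noteq> u" "t \<in> supported V E M" "t \<noteq> u"
    | "s \<in> supported V E M" "s \<noteq> u" "descendant V E v t u"
    | "descendant V E v s u" "depth V E v s = depth V E v u + 4" "t \<in> supported V E M" "t \<noteq> u"
    | "depth V E v s = depth V E v u + 4" "depth V E v t = depth V E v u + 4"
    using supported_M'_cases[OF s] supported_M'_cases[OF t] by blast
  then show False
  proof cases
    case 1
    then show False
      using incomparable \<open>s \<noteq> t\<close> st by blast
  next
    case 2
    then show False
      using incomparable u_supported st descendant_trans by blast
  next
    case 3
    then show False
      using incomparable u_supported descendant_cases[OF st] by blast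
  next
    case 4
    then show False
      using depth_less_if_descendant[OF st \<open>s \<noteq> t\<close>] by simp
  qed
qed

lemma supported_M'_depth:
  "x \<in> supported V E M' \<Longrightarrow> x \<in> supported V E M \<and> x \<noteq> u \<or> depth V E v x = depth V E v u + 4"
  using supported_M'_cases by blast

lemma potential_decreases:
  assumes "supported V E M' \<noteq> {}"
  shows "(potential M', potential M) \<in> less_than <*lex*> less_than"
proof -
  define d where "d = depth V E v u"
  have fin: "finite (supported V E M)" "finite (supported V E M')"
    using M_subset_V M'_subset_V finite_V finite_subset unfolding supported_def by blast+
  have min_M: "min_supported_depth M = d"
    unfolding min_supported_depth_def d_def
    using fin(1) u_supported u_min_depth by (intro Min_eqI) auto
  have "min_supported_depth M' \<in> depth V E v ` supported V E M'"
    unfolding min_supported_depth_def using fin(2) assms by (intro Min_in) auto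
  then obtain x where x: "x \<in> supported V E M'" "min_supported_depth M' = depth V E v x"
    by blast
  have "d \<le> min_supported_depth M'"
    using supported_M'_depth[OF x(1)] u_min_depth[of x] x(2) unfolding d_def by linarith
  show ?thesis
  proof (cases "d < min_supported_depth M'")
    case True
    have "u \<in> {x \<in> V. d \<le> depth V E v x} - {x \<in> V. min_supported_depth M' \<le> depth V E v x}"
      using True u_in_M M_subset_V unfolding d_def by auto
    moreover have "{x \<in> V. min_supported_depth M' \<le> depth V E v x} \<subseteq> {x \<in> V. d \<le> depth V E v x}"
      using True by auto
    ultimately have "{x \<in> V. min_supported_depth M' \<le> depth V E v x} \<subset> {x \<in> V. d \<le> depth V E v x}"
      by blast
    then have "card {x \<in> V. min_supported_depth M' \<le> depth V E v x} < card {x \<in> V. d \<le> depth V E v x}"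
      using finite_V by (simp add: psubset_card_mono)
    then show ?thesis
      unfolding potential_def min_M by simp
  next
    case False
    then have min_M': "min_supported_depth M' = d"
      using \<open>d \<le> min_supported_depth M'\<close> by simp
    have "{x \<in> supported V E M'. depth V E v x = d} \<subseteq> {x \<in> supported V E M. depth V E v x = d} - {u}"
      using supported_M'_depth unfolding d_def by force
    then have "card {x \<in> supported V E M'. depth V E v x = d} \<le>
        card ({x \<in> supported V E M. depth V E v x = d} - {u})"
      using fin(1) by (intro card_mono) auto
    also have "\<dots> < card {x \<in> supported V E M. depth V E v x = d}"
      using fin(1) u_supported unfolding d_def by (intro card_Diff1_less) auto
    finally show ?thesis
      unfolding potential_def min_M min_M' by simp
  qed
qed

end

section \<open>Termination and correctness\<close>

context rooted_tree
begin

lemma alg_step_preserves: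
  assumes "admissible S" and step: "alg_step V E v S S'"
  shows "admissible S'" "card S \<le> card S'"
    and "supported V E S' \<noteq> {} \<Longrightarrow> (potential S', potential S) \<in> less_than <*lex*> less_than"
proof -
  obtain u where u: "u \<in> supported V E S" "\<forall>w \<in> supported V E S. depth V E v u \<le> depth V E v w"
    and S': "S' = (S - {x \<in> a1 V E S. E x u}) \<union> {y \<in> N1 V E S. \<exists>x \<in> {x \<in> a1 V E S. E x u}. E y x}"
    using step unfolding alg_step_def Let_def by blast
  have "algorithm_step V E v S u"
    unfolding algorithm_step_def algorithm_step_axioms_def
    using rooted_tree_axioms assms(1) u by blast
  then interpret algorithm_step V E v S u .
  have "S' = M'"
    unfolding S' M'_def A_def N_def ..
  then show "admissible S'"
    unfolding admissible_def
    using dominating_M' supported_parents_outside_M' supported_incomparable_M' by blast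
  show "card S \<le> card S'"
    using card_le_card_M' \<open>S' = M'\<close> by simp
  show "supported V E S' \<noteq> {} \<Longrightarrow> (potential S', potential S) \<in> less_than <*lex*> less_than"
    using potential_decreases \<open>S' = M'\<close> by simp
qed

lemma alg_step_exists:
  assumes dom: "dominating V E S" and "\<not> minimal_dominating V E S"
  shows "\<exists>S'. alg_step V E v S S'"
proof -
  obtain S0 where "S0 \<subset> S" "dominating V E S0"
    using assms unfolding minimal_dominating_def by blast
  then obtain w where "w \<in> S" "S0 \<subseteq> S - {w}"
    by blast
  moreover have "S - {w} \<subseteq> V"
    using dom unfolding dominating_def by blast
  ultimately have "w \<in> supported V E S"
    unfolding supported_iff using dominating_mono \<open>dominating V E S0\<close> by blast
  then obtain u where "u \<in> supported V E S" "\<forall>w \<in> supported V E S. depth V E v u \<le> depth V E v w"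
    using ex_has_least_nat[of "\<lambda>x. x \<in> supported V E S"] by blast
  then show ?thesis
    using assms(2) unfolding alg_step_def Let_def by blast
qed

lemma alg_step_rtranclp_admissible:
  assumes "admissible S" "(alg_step V E v)\<^sup>*\<^sup>* S S'"
  shows "admissible S' \<and> card S \<le> card S'"
  using assms(2)
proof (induction rule: rtranclp_induct)
  case (step S' S'')
  then show ?case
    using alg_step_preserves(1,2)[of S' S''] by simp
qed (use assms(1) in simp)

lemma alg_step_no_infinite_run:
  assumes "admissible S"
  shows "\<nexists>f. f 0 = S \<and> (\<forall>i. alg_step V E v (f i) (f (Suc i)))"
proof
  assume "\<exists>f. f 0 = S \<and> (\<forall>i. alg_step V E v (f i) (f (Suc i)))"
  then obtain f where "f 0 = S" and steps: "\<And>i. alg_step V E v (f i) (f (Suc i))"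
    by blast
  have "admissible (f i)" for i
  proof (induction i)
    case (Suc i)
    then show ?case
      using alg_step_preserves(1) steps by blast
  qed (simp add: \<open>f 0 = S\<close> assms)
  moreover have "supported V E (f i) \<noteq> {}" for i
    using steps[of i] unfolding alg_step_def by blast
  ultimately have "(f (Suc i), f i) \<in> inv_image (less_than <*lex*> less_than) potential" for i
    using alg_step_preserves(3) steps by simp
  moreover have "wf (inv_image (less_than <*lex*> less_than) potential)"
    by (intro wf_inv_image wf_lex_prod wf_less_than)
  ultimately show False
    unfolding wf_iff_no_infinite_down_chain by blast
qed

end

theorem theorem4p4:
  fixes V :: "'a set" and E :: "'a \<Rightarrow> 'a \<Rightarrow> bool" and v :: 'a and M0 :: "'a set"
  assumes "is_tree V E" and "v \<in> V"
    and "dominating V E M0"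
    and "\<forall>s\<in>supported V E M0. \<forall>p. is_parent V E v s p \<longrightarrow> p \<notin> M0"
    and "\<forall>s\<in>supported V E M0. \<forall>t\<in>supported V E M0. s \<noteq> t \<longrightarrow> \<not> descendant V E v s t"
  shows "\<not> (\<exists>f. f 0 = M0 \<and> (\<forall>i. alg_step V E v (f i) (f (Suc i))))
    \<and> (\<forall>M. (alg_step V E v)\<^sup>*\<^sup>* M0 M \<and> \<not> (\<exists>M'. alg_step V E v M M')
           \<longrightarrow> minimal_dominating V E M \<and> card M0 \<le> card M)"
proof -
  interpret rooted_tree V E v
    using assms(1,2) by (rule rooted_tree.intro)
  have "admissible M0"
    unfolding admissible_def supported_parents_outside_def supported_incomparable_def
    using assms(3-5) by blast
  moreover have "minimal_dominating V E M \<and> card M0 \<le> card M"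
    if "(alg_step V E v)\<^sup>*\<^sup>* M0 M" "\<not> (\<exists>M'. alg_step V E v M M')" for M
  proof -
    have "admissible M" "card M0 \<le> card M"
      using alg_step_rtranclp_admissible[OF \<open>admissible M0\<close> that(1)] by blast+
    then show ?thesis
      using alg_step_exists that(2) unfolding admissible_def by blast
  qed
  ultimately show ?thesis
    using alg_step_no_infinite_run by blast
qed

end
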